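(* Let $(P,H,\phi)$ be a host-parasite triple and let $\Psi=\{\psi_1,\dots,\psi_l\}\subseteq\mathcal R(P,H,\phi)$ with $l\ge1$. Then $\psi^{\Psi}_{med}$ is a geometric median for $\Psi$ in $\mathcal R(P,H,\phi)$ endowed with the metric $d_{edit}$ $(=d_{path})$; that is, for every $\psi\in\mathcal R(P,H,\phi)$, $$\sum_{i=1}^l d_{edit}(\psi^{\Psi}_{med},\psi_i)\le\sum_{i=1}^l d_{edit}(\psi,\psi_i).$$
   Context: A phylogenetic tree $T$ is a finite rooted tree with root $\rho_T$ (indegree $0$, outdegree $2$), in which every vertex other than the root and the leaves has indegree $1$ and outdegree $2$; $V(T)$ is its vertex set, $L(T)$ its leaf set, $V^o(T)=V(T)-L(T)$. For $v\in V^o(T)$, $Ch(v)$ is the set of children of $v$; for $v\ne\rho_T$, $par(v)$ is its parent. $x\succeq_T y$ means $x$ lies on the path from $\rho_T$ to $y$; $x\succ_T y$ means $x\succeq_T y$ and $x\ne y$. For $L\subseteq L(T)$ with $|L|\ge 2$, $lca_T(L)$ is the lowest vertex above every element of $L$; if $L=\{x\}$ then $lca_T(L)=x$. $d_T(v,w)$ is the number of edges on the (undirected) path in $T$ between $v$ and $w$. A host-parasite triple $(P,H,\phi)$ consists of two phylogenetic trees $P,H$ and a map $\phi:L(P)\to L(H)$. A reconciliation map is a map $\psi:V(P)\to V(H)$ such that (i) $\psi$ restricted to $L(P)$ equals $\phi$, and (ii) for every $v\in V^o(P)$ and every child $v'$ of $v$, $\psi(v)\succeq_H\psi(v')$; $\mathcal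 R(P,H,\phi)$ is the set of all of them. For $v\in V(P)$ let $m(v)=lca_H(\{\phi(x): x\in L(P),\ v\succeq_P x\})$ and $A(v)=\{w\in V(H): \rho_H\succeq_H w\succeq_H m(v)\}$. Up operation: given $\psi\in\mathcal R(P,H,\phi)$ and $w\in V(P)$ with $\psi(w)\notin\{\rho_H,\psi(par(w))\}$ (second condition vacuous if $w=\rho_P$), $\psi^{up}_w$ agrees with $\psi$ except $\psi^{up}_w(w)=par(\psi(w))$. Down operation: given $\psi\in\mathcal R(P,H,\phi)$ and $w\in V^o(P)$ with $\psi(w)\succ_H m(w)$ and $\psi(w)\ne\psi(v')$ for all $v'\in Ch(w)$, $\psi^{down}_w$ agrees with $\psi$ except that $\psi^{down}_w(w)$ is the unique vertex of $A(w)\cap Ch(\psi(w))$. $d_{edit}(\psi,\psi')$ is the smallest number of up/down operations transforming $\psi$ into $\psi'$; it equals $d_{path}(\psi,\psi')=\sum_{v\in V(P)}d_H(\psi(v),\psi'(v))$. For a finite multiset $A$ of reals, $med(A)$ is its median (average of the two middle elements for even cardinality); for real $r$, $[r]$ is the nearest integer, the larger one in case of a tie; for integers $n_1,\dots,n_l$, $zmed(n_1,\dots,n_l)=[med(\{n_1,\dots,n_l\})]$. The map $\psi^{\Psi}_{med}:V(P)\to V(H)$ is defined by letting $\psi^{\Psi}_{med}(v)$, for $v\in V(P)$, be the element $w\in A(v)$ with $d_H(m(v),w)=zmed(n_1,\dots,n_l)$, where $n_i=d_H(m(v),\psi_i(v))$. *)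

theory Defs
  imports Complex_Main "HOL-Library.Multiset"
begin

record 'a rtree =
  verts :: "'a set"
  root :: 'a
  parent :: "'a \<Rightarrow> 'a"

definition children :: "'a rtree \<Rightarrow> 'a \<Rightarrow> 'a set" where
  "children T v = {u \<in> verts T. u \<noteq> root T \<and> parent T u = v}"

definition leaves :: "'a rtree \<Rightarrow> 'a set" where
  "leaves T = {v \<in> verts T. children T v = {}}"

definition inner :: "'a rtree \<Rightarrow> 'a set" where
  "inner T = verts T - leaves T"

text \<open>Phylogenetic tree: finite rooted tree, every vertex reaches the root via parents,
  root and every inner vertex have exactly two children (indegree of non-root vertices is 1
  via the parent function; the root has no parent).\<close>
definition phylo_tree :: "'a rtree \<Rightarrow> bool" where
  "phylo_tree T \<longleftrightarrow> finite (verts T) \<and> root T \<in> verts T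
     \<and> (\<forall>v \<in> verts T - {root T}. parent T v \<in> verts T)
     \<and> (\<forall>v \<in> verts T. \<exists>n. (parent T ^^ n) v = root T)
     \<and> root T \<notin> leaves T
     \<and> (\<forall>v \<in> inner T. card (children T v) = 2)"

text \<open>anc T x y means x \<succeq>_T y: x lies on the path from the root to y.\<close>
inductive anc :: "'a rtree \<Rightarrow> 'a \<Rightarrow> 'a \<Rightarrow> bool" for T where
  refl: "x \<in> verts T \<Longrightarrow> anc T x x"
| step: "anc T x (parent T y) \<Longrightarrow> y \<in> verts T \<Longrightarrow> y \<noteq> root T \<Longrightarrow> anc T x y"

definition sanc :: "'a rtree \<Rightarrow> 'a \<Rightarrow> 'a \<Rightarrow> bool" where
  "sanc T x y \<longleftrightarrow> anc T x y \<and> x \<noteq> y"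

definition lca :: "'a rtree \<Rightarrow> 'a set \<Rightarrow> 'a" where
  "lca T L = (THE w. w \<in> verts T \<and> (\<forall>x\<in>L. anc T w x)
                     \<and> (\<forall>w'\<in>verts T. (\<forall>x\<in>L. anc T w' x) \<longrightarrow> anc T w' w))"

definition adj :: "'a rtree \<Rightarrow> 'a \<Rightarrow> 'a \<Rightarrow> bool" where
  "adj T u v \<longleftrightarrow> u \<in> verts T \<and> v \<in> verts T \<and>
     ((u \<noteq> root T \<and> parent T u = v) \<or> (v \<noteq> root T \<and> parent T v = u))"

definition walk :: "'a rtree \<Rightarrow> 'a list \<Rightarrow> 'a \<Rightarrow> 'a \<Rightarrow> bool" where
  "walk T xs u v \<longleftrightarrow> xs \<noteq> [] \<and> hd xs = u \<and> last xs = v \<and> set xs \<subseteq> verts T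
     \<and> (\<forall>i. Suc i < length xs \<longrightarrow> adj T (xs ! i) (xs ! Suc i))"

definition tdist :: "'a rtree \<Rightarrow> 'a \<Rightarrow> 'a \<Rightarrow> nat" where
  "tdist T u v = (LEAST n. \<exists>xs. walk T xs u v \<and> length xs = Suc n)"

definition hp_triple :: "'p rtree \<Rightarrow> 'h rtree \<Rightarrow> ('p \<Rightarrow> 'h) \<Rightarrow> bool" where
  "hp_triple P H \<phi> \<longleftrightarrow> phylo_tree P \<and> phylo_tree H \<and> (\<forall>x \<in> leaves P. \<phi> x \<in> leaves H)"

text \<open>Reconciliation maps V(P) \<rightarrow> V(H), represented extensionally (undefined outside V(P)).\<close>
definition recon :: "'p rtree \<Rightarrow> 'h rtree \<Rightarrow> ('p \<Rightarrow> 'h) \<Rightarrow> ('p \<Rightarrow> 'h) set" where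
  "recon P H \<phi> = {\<psi>. (\<forall>v \<in> verts P. \<psi> v \<in> verts H)
      \<and> (\<forall>v. v \<notin> verts P \<longrightarrow> \<psi> v = undefined)
      \<and> (\<forall>x \<in> leaves P. \<psi> x = \<phi> x)
      \<and> (\<forall>v \<in> inner P. \<forall>v' \<in> children P v. anc H (\<psi> v) (\<psi> v'))}"

definition mlca :: "'p rtree \<Rightarrow> 'h rtree \<Rightarrow> ('p \<Rightarrow> 'h) \<Rightarrow> 'p \<Rightarrow> 'h" where
  "mlca P H \<phi> v = lca H (\<phi> ` {x \<in> leaves P. anc P v x})"

definition Aset :: "'p rtree \<Rightarrow> 'h rtree \<Rightarrow> ('p \<Rightarrow> 'h) \<Rightarrow> 'p \<Rightarrow> 'h set" where
  "Aset P H \<phi> v = {w \<in> verts H. anc H (root H) w \<and> anc H w (mlca P H \<phi> v)}"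

definition up_ok :: "'p rtree \<Rightarrow> 'h rtree \<Rightarrow> ('p \<Rightarrow> 'h) \<Rightarrow> ('p \<Rightarrow> 'h) \<Rightarrow> 'p \<Rightarrow> bool" where
  "up_ok P H \<phi> \<psi> w \<longleftrightarrow> \<psi> \<in> recon P H \<phi> \<and> w \<in> verts P \<and> \<psi> w \<noteq> root H
     \<and> (w \<noteq> root P \<longrightarrow> \<psi> w \<noteq> \<psi> (parent P w))"

definition up_op :: "'h rtree \<Rightarrow> ('p \<Rightarrow> 'h) \<Rightarrow> 'p \<Rightarrow> ('p \<Rightarrow> 'h)" where
  "up_op H \<psi> w = \<psi>(w := parent H (\<psi> w))"

definition down_ok :: "'p rtree \<Rightarrow> 'h rtree \<Rightarrow> ('p \<Rightarrow> 'h) \<Rightarrow> ('p \<Rightarrow> 'h) \<Rightarrow> 'p \<Rightarrow> bool" where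
  "down_ok P H \<phi> \<psi> w \<longleftrightarrow> \<psi> \<in> recon P H \<phi> \<and> w \<in> inner P
     \<and> sanc H (\<psi> w) (mlca P H \<phi> w) \<and> (\<forall>v' \<in> children P w. \<psi> w \<noteq> \<psi> v')"

definition down_op :: "'p rtree \<Rightarrow> 'h rtree \<Rightarrow> ('p \<Rightarrow> 'h) \<Rightarrow> ('p \<Rightarrow> 'h) \<Rightarrow> 'p \<Rightarrow> ('p \<Rightarrow> 'h)" where
  "down_op P H \<phi> \<psi> w = \<psi>(w := (THE u. u \<in> Aset P H \<phi> w \<inter> children H (\<psi> w)))"

definition edit_step :: "'p rtree \<Rightarrow> 'h rtree \<Rightarrow> ('p \<Rightarrow> 'h) \<Rightarrow> ('p \<Rightarrow> 'h) \<Rightarrow> ('p \<Rightarrow> 'h) \<Rightarrow> bool" where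
  "edit_step P H \<phi> \<psi> \<psi>' \<longleftrightarrow>
     (\<exists>w. up_ok P H \<phi> \<psi> w \<and> \<psi>' = up_op H \<psi> w) \<or>
     (\<exists>w. down_ok P H \<phi> \<psi> w \<and> \<psi>' = down_op P H \<phi> \<psi> w)"

definition d_edit :: "'p rtree \<Rightarrow> 'h rtree \<Rightarrow> ('p \<Rightarrow> 'h) \<Rightarrow> ('p \<Rightarrow> 'h) \<Rightarrow> ('p \<Rightarrow> 'h) \<Rightarrow> nat" where
  "d_edit P H \<phi> \<psi> \<psi>' = (LEAST n. (edit_step P H \<phi> ^^ n) \<psi> \<psi>')"

definition med :: "real multiset \<Rightarrow> real" where
  "med A = (let xs = sorted_list_of_multiset A; n = size A in
     if odd n then xs ! (n div 2) else (xs ! (n div 2 - 1) + xs ! (n div 2)) / 2)"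

definition nearest_int :: "real \<Rightarrow> int" where
  "nearest_int r = \<lfloor>r + 1/2\<rfloor>"

definition zmed :: "int multiset \<Rightarrow> int" where
  "zmed N = nearest_int (med (image_mset real_of_int N))"

definition psi_med :: "'p rtree \<Rightarrow> 'h rtree \<Rightarrow> ('p \<Rightarrow> 'h) \<Rightarrow> (nat \<Rightarrow> ('p \<Rightarrow> 'h)) \<Rightarrow> nat \<Rightarrow> 'p \<Rightarrow> 'h" where
  "psi_med P H \<phi> \<Psi> l v = (if v \<in> verts P then
     (THE w. w \<in> Aset P H \<phi> v \<and>
        int (tdist H (mlca P H \<phi> v) w)
          = zmed (image_mset (\<lambda>i. int (tdist H (mlca P H \<phi> v) (\<Psi> i v))) (mset [1..<Suc l])))
     else undefined)"

end

theory Submission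
  imports Defs
begin

text \<open>
  For every vertex \<open>v\<close> of \<open>P\<close>, the images of \<open>v\<close> under all reconciliation maps lie on the path
  from the root of \<open>H\<close> down to \<open>m(v)\<close>, so on this chain the tree distance is the difference of
  depths, and \<open>d\<^sub>e\<^sub>d\<^sub>i\<^sub>t = d\<^sub>p\<^sub>a\<^sub>t\<^sub>h\<close> is a sum of one-dimensional distances
  \<open>|n - n'|\<close> between depths below \<open>m(v)\<close>. The sum of distances to the \<open>\<Psi>\<^sub>i\<close> therefore splits
  into independent one-dimensional problems, each minimised by any integer median of the
  \<open>n\<^sub>i\<close>, in particular by the rounded median used by \<open>\<psi>\<^sub>m\<^sub>e\<^sub>d\<close>. What remains is to check
  that the vertex-wise medians again form a reconciliation map: the median of depths is
  monotone along edges of \<open>P\<close> because each \<open>\<Psi>\<^sub>i\<close> is.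
\<close>

lemma finite_has_max:
  fixes f :: "'a \<Rightarrow> 'b::linorder"
  assumes "finite S" "x \<in> S"
  obtains y where "y \<in> S" "\<And>z. z \<in> S \<Longrightarrow> f z \<le> f y"
proof -
  have "Max (f ` S) \<in> f ` S"
    using assms by (intro Max_in) auto
  then obtain y where "y \<in> S" "f y = Max (f ` S)"
    by (metis imageE)
  then show ?thesis using that assms(1) by simp
qed

lemma finite_has_min:
  fixes f :: "'a \<Rightarrow> 'b::linorder"
  assumes "finite S" "x \<in> S"
  obtains y where "y \<in> S" "\<And>z. z \<in> S \<Longrightarrow> f y \<le> f z"
proof -
  have "Min (f ` S) \<in> f ` S"
    using assms by (intro Min_in) auto
  then obtain y where "y \<in> S" "f y = Min (f ` S)"
    by (metis imageE)
  then show ?thesis using that assms(1) by simp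
qed

section \<open>Rooted trees\<close>

definition depth :: "'a rtree \<Rightarrow> 'a \<Rightarrow> nat" where
  "depth T v = (LEAST n. (parent T ^^ n) v = root T)"

lemma anc_trans: "anc T b c \<Longrightarrow> anc T a b \<Longrightarrow> anc T a c"
  by (induction rule: anc.induct) (auto intro: anc.step)

lemma anc_eq_or_anc_parent:
  "anc T x y \<Longrightarrow> x = y \<or> (y \<in> verts T \<and> y \<noteq> root T \<and> anc T x (parent T y))"
  by (erule anc.cases) auto

lemma anc_linear: "anc T x y \<Longrightarrow> anc T z y \<Longrightarrow> anc T x z \<or> anc T z x"
proof (induction arbitrary: z rule: anc.induct)
  case (step x y)
  then show ?case
    using anc_eq_or_anc_parent[OF step.prems] by (auto intro: anc.step)
qed simp

lemma anc_child: "anc T x y \<Longrightarrow> x \<noteq> y \<Longrightarrow> \<exists>c \<in> children T x. anc T c y"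
proof (induction rule: anc.induct)
  case (step x y)
  then show ?case
    by (cases "x = parent T y") (auto intro: anc.refl anc.step simp: children_def)
qed simp

lemma leaf_anc: "x \<in> leaves T \<Longrightarrow> anc T x y \<Longrightarrow> y = x"
  using anc_child unfolding leaves_def by fastforce

lemma childrenD: "c \<in> children T v \<Longrightarrow> c \<in> verts T \<and> c \<noteq> root T \<and> parent T c = v"
  by (simp add: children_def)

lemma in_children_parent: "c \<in> verts T \<Longrightarrow> c \<noteq> root T \<Longrightarrow> c \<in> children T (parent T c)"
  by (simp add: children_def)

lemma walk_Cons: "walk T xs y v \<Longrightarrow> adj T x y \<Longrightarrow> walk T (x # xs) x v"
  unfolding walk_def
proof (intro conjI allI impI; (elim conjE)?)
  fix i assume "xs \<noteq> []" "hd xs = y" "adj T x y"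
    and adj: "\<forall>i. Suc i < length xs \<longrightarrow> adj T (xs ! i) (xs ! Suc i)"
    and i: "Suc i < length (x # xs)"
  then show "adj T ((x # xs) ! i) ((x # xs) ! Suc i)"
    by (cases i) (auto simp: hd_conv_nth)
qed (auto simp: adj_def)

lemma walk_ConsD: "walk T (x # y # ys) u v \<Longrightarrow> walk T (y # ys) y v \<and> adj T x y \<and> x = u"
  unfolding walk_def
proof (intro conjI allI impI; (elim conjE)?)
  fix i assume adj: "\<forall>i. Suc i < length (x # y # ys) \<longrightarrow> adj T ((x # y # ys) ! i) ((x # y # ys) ! Suc i)"
  show "adj T x y" using adj[rule_format, of 0] by simp
  show "Suc i < length (y # ys) \<Longrightarrow> adj T ((y # ys) ! i) ((y # ys) ! Suc i)"
    using adj[rule_format, of "Suc i"] by simp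
qed auto

locale phylo =
  fixes T :: "'a rtree"
  assumes phylo: "phylo_tree T"
begin

lemma finite_verts: "finite (verts T)"
  using phylo by (simp add: phylo_tree_def)

lemma root_in_verts: "root T \<in> verts T"
  using phylo by (simp add: phylo_tree_def)

lemma parent_in_verts: "v \<in> verts T \<Longrightarrow> v \<noteq> root T \<Longrightarrow> parent T v \<in> verts T"
  using phylo by (simp add: phylo_tree_def)

lemma anc_in_verts: "anc T x y \<Longrightarrow> x \<in> verts T \<and> y \<in> verts T"
  by (induction rule: anc.induct) (auto dest: parent_in_verts)

lemma anc_parent: "v \<in> verts T \<Longrightarrow> v \<noteq> root T \<Longrightarrow> anc T (parent T v) v"
  by (rule anc.step) (auto intro: anc.refl parent_in_verts)

lemma anc_of_child: "c \<in> children T v \<Longrightarrow> anc T v c"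
  using anc_parent childrenD by fastforce

lemma parent_in_inner: "c \<in> verts T \<Longrightarrow> c \<noteq> root T \<Longrightarrow> parent T c \<in> inner T"
  using in_children_parent[of c T] parent_in_verts[of c] unfolding inner_def leaves_def by auto

lemma funpow_parent_depth: "v \<in> verts T \<Longrightarrow> (parent T ^^ depth T v) v = root T"
  using phylo unfolding depth_def phylo_tree_def by (meson LeastI)

lemma depth_root: "depth T (root T) = 0"
  unfolding depth_def by (rule Least_eq_0) simp

lemma depth_eq_0: "v \<in> verts T \<Longrightarrow> depth T v = 0 \<Longrightarrow> v = root T"
  using funpow_parent_depth by fastforce

lemma depth_parent:
  assumes v: "v \<in> verts T" "v \<noteq> root T"
  shows "depth T v = Suc (depth T (parent T v))"
proof -
  have reach: "(parent T ^^ depth T v) v = root T"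
    using funpow_parent_depth[OF v(1)] .
  then obtain k where k: "depth T v = Suc k"
    using v(2) by (cases "depth T v") auto
  have "(parent T ^^ k) (parent T v) = root T"
    using reach k by (simp add: funpow_Suc_right del: funpow.simps)
  then have "depth T (parent T v) \<le> k"
    unfolding depth_def by (rule Least_le)
  moreover have "(parent T ^^ Suc (depth T (parent T v))) v = root T"
    using funpow_parent_depth[OF parent_in_verts[OF v]]
    by (simp add: funpow_Suc_right del: funpow.simps)
  then have "depth T v \<le> Suc (depth T (parent T v))"
    unfolding depth_def by (rule Least_le)
  ultimately show ?thesis using k by simp
qed

lemma depth_child: "c \<in> children T v \<Longrightarrow> depth T c = Suc (depth T v)"
  using childrenD depth_parent by metis

lemma anc_depth_le: "anc T x y \<Longrightarrow> depth T x \<le> depth T y"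
  by (induction rule: anc.induct) (auto simp: depth_parent)

lemma anc_depth_less:
  assumes "anc T x y" "x \<noteq> y"
  shows "depth T x < depth T y"
proof -
  have "y \<in> verts T" "y \<noteq> root T" "anc T x (parent T y)"
    using anc_eq_or_anc_parent[OF assms(1)] assms(2) by auto
  then show ?thesis using anc_depth_le depth_parent by fastforce
qed

lemma anc_antisym: "anc T x y \<Longrightarrow> anc T y x \<Longrightarrow> x = y"
  using anc_depth_le anc_depth_less by (meson leD)

lemma root_anc: "v \<in> verts T \<Longrightarrow> anc T (root T) v"
proof (induction "depth T v" arbitrary: v)
  case 0
  then show ?case using depth_eq_0 by (auto intro: anc.refl)
next
  case (Suc n)
  then have "v \<noteq> root T" using depth_root by auto
  then show ?case using Suc depth_parent parent_in_verts by (auto intro: anc.step)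
qed

lemma common_desc_anc_of_depth_le:
  "anc T a c \<Longrightarrow> anc T b c \<Longrightarrow> depth T a \<le> depth T b \<Longrightarrow> anc T a b"
  using anc_linear anc_depth_less by (metis leD)

lemma common_desc_eq_of_depth_eq:
  "anc T a c \<Longrightarrow> anc T b c \<Longrightarrow> depth T a = depth T b \<Longrightarrow> a = b"
  using anc_linear anc_depth_less by (metis less_irrefl)

lemma anc_of_depth: "b \<in> verts T \<Longrightarrow> k \<le> depth T b \<Longrightarrow> \<exists>a. anc T a b \<and> depth T a = k"
proof (induction "depth T b - k" arbitrary: b)
  case 0
  then show ?case by (auto intro: anc.refl)
next
  case (Suc n)
  then have b: "b \<noteq> root T" using depth_root by auto
  then have "\<exists>a. anc T a (parent T b) \<and> depth T a = k"
    using Suc depth_parent[of b] parent_in_verts[of b] by simp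
  then show ?case using Suc.prems(1) b by (auto intro: anc.step)
qed

lemma leaf_below: "v \<in> verts T \<Longrightarrow> \<exists>x \<in> leaves T. anc T v x"
proof -
  assume v: "v \<in> verts T"
  define D where "D = {x \<in> verts T. anc T v x}"
  have "finite D" "v \<in> D"
    using finite_verts v unfolding D_def by (auto intro: anc.refl)
  then obtain x where x: "x \<in> D" and deepest: "\<And>y. y \<in> D \<Longrightarrow> depth T y \<le> depth T x"
    using finite_has_max[of D v "depth T"] by blast
  have "children T x = {}"
  proof (rule ccontr)
    assume "children T x \<noteq> {}"
    then obtain c where c: "c \<in> children T x" by blast
    then have "c \<in> D"
      using x childrenD[OF c] anc.step[of T v c] unfolding D_def by auto
    then show False using deepest depth_child[OF c] by fastforce
  qed
  then show ?thesis using x unfolding D_def leaves_def by blast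
qed

lemma lca_props:
  assumes L: "L \<subseteq> verts T" "L \<noteq> {}"
  shows "lca T L \<in> verts T" "\<And>x. x \<in> L \<Longrightarrow> anc T (lca T L) x"
    "\<And>w. w \<in> verts T \<Longrightarrow> (\<forall>x\<in>L. anc T w x) \<Longrightarrow> anc T w (lca T L)"
proof -
  define C where "C = {w \<in> verts T. \<forall>x\<in>L. anc T w x}"
  have "finite C" "root T \<in> C"
    using finite_verts root_in_verts root_anc L(1) unfolding C_def by auto
  then obtain w where w: "w \<in> C" and deepest: "\<And>y. y \<in> C \<Longrightarrow> depth T y \<le> depth T w"
    using finite_has_max[of C "root T" "depth T"] by blast
  obtain x0 where x0: "x0 \<in> L" using L(2) by blast
  let ?Q = "\<lambda>w. w \<in> verts T \<and> (\<forall>x\<in>L. anc T w x) \<and> (\<forall>w'\<in>verts T. (\<forall>x\<in>L. anc T w' x) \<longrightarrow> anc T w' w)"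
  have "anc T w' w" if "w' \<in> C" for w'
    using common_desc_anc_of_depth_le[of w' x0 w] that w deepest[OF that] x0 unfolding C_def by blast
  then have "?Q w" using w unfolding C_def by blast
  moreover have "y = w" if "?Q y" for y
    using that \<open>?Q w\<close> anc_antisym by blast
  ultimately have "?Q (lca T L)"
    unfolding lca_def by (rule theI)
  then show "lca T L \<in> verts T" "\<And>x. x \<in> L \<Longrightarrow> anc T (lca T L) x"
    "\<And>w. w \<in> verts T \<Longrightarrow> (\<forall>x\<in>L. anc T w x) \<Longrightarrow> anc T w (lca T L)"
    by blast+
qed

lemma walk_depth_diff:
  "walk T xs u v \<Longrightarrow> \<bar>int (depth T u) - int (depth T v)\<bar> \<le> int (length xs) - 1"
proof (induction xs arbitrary: u)
  case (Cons x xs)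
  show ?case
  proof (cases xs)
    case Nil
    then show ?thesis using Cons.prems unfolding walk_def by auto
  next
    case (Cons y ys)
    then have "walk T xs y v" "adj T u y"
      using walk_ConsD[of T x y ys u v] Cons.prems \<open>xs = y # ys\<close> by auto
    moreover have "depth T u = Suc (depth T y) \<or> depth T y = Suc (depth T u)"
      using \<open>adj T u y\<close> depth_parent unfolding adj_def by auto
    ultimately show ?thesis using Cons.IH[of y] by auto
  qed
qed (simp add: walk_def)

lemma walk_to_anc: "anc T a b \<Longrightarrow> \<exists>xs. walk T xs b a \<and> length xs = Suc (depth T b - depth T a)"
proof (induction rule: anc.induct)
  case (refl x)
  then have "walk T [x] x x" by (simp add: walk_def)
  then show ?case by fastforce
next
  case (step x y)
  then obtain xs where xs: "walk T xs (parent T y) x" "length xs = Suc (depth T (parent T y) - depth T x)"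
    by blast
  have "adj T y (parent T y)" using step.hyps(2,3) parent_in_verts unfolding adj_def by blast
  then have "walk T (y # xs) y x" using walk_Cons xs(1) by metis
  moreover have "length (y # xs) = Suc (depth T y - depth T x)"
    using xs(2) depth_parent[OF step.hyps(2,3)] anc_depth_le[OF step.hyps(1)] by simp
  ultimately show ?case by blast
qed

lemma tdist_to_anc:
  assumes "anc T a b"
  shows "tdist T b a = depth T b - depth T a"
  unfolding tdist_def
proof (rule Least_equality)
  show "\<exists>xs. walk T xs b a \<and> length xs = Suc (depth T b - depth T a)"
    using walk_to_anc[OF assms] .
next
  fix n assume "\<exists>xs. walk T xs b a \<and> length xs = Suc n"
  then show "depth T b - depth T a \<le> n"
    using walk_depth_diff by fastforce
qed

end

section \<open>Integer medians\<close>

abbreviation zmed_of :: "(nat \<Rightarrow> int) \<Rightarrow> nat \<Rightarrow> int" where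
  "zmed_of n l \<equiv> zmed (image_mset n (mset [1..<Suc l]))"

definition order_stat :: "(nat \<Rightarrow> int) \<Rightarrow> nat \<Rightarrow> nat \<Rightarrow> int" where
  "order_stat n l j = sort (map n [1..<Suc l]) ! j"

lemma card_filter_order_stat:
  "card {i \<in> {1..l}. Q (n i)} = card {k. k < l \<and> Q (order_stat n l k)}"
proof -
  let ?xs = "sort (map n [1..<Suc l])"
  have "card {i \<in> {1..l}. Q (n i)} = card (set (filter (Q \<circ> n) [1..<Suc l]))"
    by (intro arg_cong[where f = card]) auto
  also have "\<dots> = length (filter (Q \<circ> n) [1..<Suc l])"
    by (rule distinct_card) simp
  also have "\<dots> = length (filter Q (map n [1..<Suc l]))"
    by (simp add: filter_map)
  also have "\<dots> = length (filter Q ?xs)"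
    by (metis mset_filter mset_sort size_mset)
  also have "\<dots> = card {k. k < l \<and> Q (order_stat n l k)}"
    by (simp add: length_filter_conv_card order_stat_def)
  finally show ?thesis .
qed

lemma order_stat_mono: "j \<le> j' \<Longrightarrow> j' < l \<Longrightarrow> order_stat n l j \<le> order_stat n l j'"
  unfolding order_stat_def by (simp add: sorted_nth_mono)

lemma order_stat_mem: "j < l \<Longrightarrow> \<exists>i\<in>{1..l}. order_stat n l j = n i"
proof -
  assume "j < l"
  then have "order_stat n l j \<in> set (sort (map n [1..<Suc l]))"
    unfolding order_stat_def by (intro nth_mem) simp
  then show ?thesis by (auto simp del: upt_Suc)
qed

lemma card_le_order_stat:
  assumes "j < l" shows "Suc j \<le> card {i \<in> {1..l}. n i \<le> order_stat n l j}"
proof -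
  have "{..j} \<subseteq> {k. k < l \<and> order_stat n l k \<le> order_stat n l j}"
    using order_stat_mono assms by auto
  then have "card {..j} \<le> card {k. k < l \<and> order_stat n l k \<le> order_stat n l j}"
    by (intro card_mono) auto
  then show ?thesis
    using card_filter_order_stat[where Q = "\<lambda>x. x \<le> order_stat n l j"] by simp
qed

lemma card_less_order_stat:
  assumes "j < l" shows "card {i \<in> {1..l}. n i < order_stat n l j} \<le> j"
proof -
  have "{k. k < l \<and> order_stat n l k < order_stat n l j} \<subseteq> {..<j}"
    using order_stat_mono[of j _ l n] by (auto simp: not_less[symmetric])
  then have "card {k. k < l \<and> order_stat n l k < order_stat n l j} \<le> card {..<j}"
    by (intro card_mono) auto
  then show ?thesis
    using card_filter_order_stat[where Q = "\<lambda>x. x < order_stat n l j"] by simp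
qed

lemma order_stat_shift_le:
  assumes j: "j < l" and le: "\<And>i. i \<in> {1..l} \<Longrightarrow> n' i \<le> n i + k"
  shows "order_stat n' l j \<le> order_stat n l j + k"
proof (rule ccontr)
  assume "\<not> ?thesis"
  then have "{i \<in> {1..l}. n i \<le> order_stat n l j} \<subseteq> {i \<in> {1..l}. n' i < order_stat n' l j}"
    using le by force
  then have "card {i \<in> {1..l}. n i \<le> order_stat n l j} \<le> card {i \<in> {1..l}. n' i < order_stat n' l j}"
    by (intro card_mono) auto
  then show False using card_le_order_stat[OF j, of n] card_less_order_stat[OF j, of n'] by simp
qed

text \<open>The median of \<open>l\<close> values is the mean of the order statistics of ranks
  \<open>(l - 1) div 2\<close> and \<open>l div 2\<close> (counted from 0), which coincide for odd \<open>l\<close>; rounding up a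
  half-integer \<open>(a + b) / 2\<close> gives \<open>(a + b + 1) div 2\<close>.\<close>

lemma zmed_eq_order_stat:
  assumes l: "l \<ge> 1"
  shows "zmed_of n l = (order_stat n l ((l - 1) div 2) + order_stat n l (l div 2) + 1) div 2"
proof -
  let ?xs = "sort (map n [1..<Suc l])"
  let ?a = "order_stat n l ((l - 1) div 2)" and ?b = "order_stat n l (l div 2)"
  have "image_mset real_of_int (image_mset n (mset [1..<Suc l])) = mset (map real_of_int ?xs)"
    by (simp add: multiset.map_comp)
  moreover have "sorted (map real_of_int ?xs)"
    by (simp add: sorted_map)
  ultimately have sorted_reals:
    "sorted_list_of_multiset (image_mset real_of_int (image_mset n (mset [1..<Suc l]))) = map real_of_int ?xs"
    by (metis sorted_list_of_multiset_mset sorted_sort_id)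
  have "med (image_mset real_of_int (image_mset n (mset [1..<Suc l]))) = (real_of_int ?a + real_of_int ?b) / 2"
  proof (cases "odd l")
    case True
    then have "(l - 1) div 2 = l div 2" by presburger
    then show ?thesis using True l unfolding med_def Let_def sorted_reals order_stat_def by simp
  next
    case False
    then have "l div 2 - 1 = (l - 1) div 2" "l div 2 < l" using l by presburger+
    then show ?thesis using False unfolding med_def Let_def sorted_reals order_stat_def by simp
  qed
  then have "zmed (image_mset n (mset [1..<Suc l])) = \<lfloor>real_of_int (?a + ?b + 1) / real_of_int 2\<rfloor>"
    unfolding zmed_def nearest_int_def by (simp add: add_divide_distrib)
  then show ?thesis by (simp only: floor_divide_of_int_eq)
qed

lemma zmed_bounds:
  assumes l: "l \<ge> 1" and bounds: "\<And>i. i \<in> {1..l} \<Longrightarrow> a \<le> n i \<and> n i \<le> b"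
  shows "a \<le> zmed_of n l" "zmed_of n l \<le> b"
proof -
  let ?lo = "order_stat n l ((l - 1) div 2)" and ?hi = "order_stat n l (l div 2)"
  have "a \<le> ?lo" "?hi \<le> b"
    using order_stat_mem[of "(l - 1) div 2" l n] order_stat_mem[of "l div 2" l n] bounds l by force+
  moreover have "?lo \<le> ?hi" using order_stat_mono l by simp
  ultimately show "a \<le> zmed_of n l" "zmed_of n l \<le> b"
    unfolding zmed_eq_order_stat[OF l] by presburger+
qed

lemma zmed_shift_le:
  assumes l: "l \<ge> 1" and le: "\<And>i. i \<in> {1..l} \<Longrightarrow> n' i \<le> n i + k"
  shows "zmed_of n' l \<le> zmed_of n l + k"
proof -
  have "order_stat n' l j \<le> order_stat n l j + k" if "j < l" for j
    using order_stat_shift_le[OF that le] .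
  moreover have "(l - 1) div 2 < l" "l div 2 < l" using l by auto
  ultimately have "order_stat n' l ((l - 1) div 2) \<le> order_stat n l ((l - 1) div 2) + k"
    "order_stat n' l (l div 2) \<le> order_stat n l (l div 2) + k" by blast+
  then show ?thesis unfolding zmed_eq_order_stat[OF l] by presburger
qed

lemma sum_abs_diff_le_of_le:
  fixes n :: "'a \<Rightarrow> int"
  assumes I: "finite I" and half: "2 * card {i \<in> I. z < n i} \<le> card I" and zx: "z \<le> x"
  shows "(\<Sum>i\<in>I. \<bar>z - n i\<bar>) \<le> (\<Sum>i\<in>I. \<bar>x - n i\<bar>)"
proof -
  let ?d = "x - z" and ?A = "{i \<in> I. n i \<le> z}" and ?B = "{i \<in> I. z < n i}"
  have "I \<inter> {i. n i \<le> z} = ?A" "I \<inter> - {i. n i \<le> z} = ?B" by auto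
  then have "(\<Sum>i\<in>I. if n i \<le> z then ?d else - ?d) = int (card ?A) * ?d - int (card ?B) * ?d"
    using sum.If_cases[OF I, of "\<lambda>i. n i \<le> z" "\<lambda>_. ?d" "\<lambda>_. - ?d"] by (simp add: algebra_simps)
  moreover have "card ?A + card ?B = card (?A \<union> ?B)"
    by (rule card_Un_disjoint[symmetric]) (use I in auto)
  moreover have "?A \<union> ?B = I" by auto
  ultimately have "0 \<le> (\<Sum>i\<in>I. if n i \<le> z then ?d else - ?d)"
    using half zx by (simp add: left_diff_distrib[symmetric])
  moreover have "(\<Sum>i\<in>I. \<bar>z - n i\<bar> + (if n i \<le> z then ?d else - ?d)) \<le> (\<Sum>i\<in>I. \<bar>x - n i\<bar>)"
    by (rule sum_mono) (use zx in auto)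
  ultimately show ?thesis by (simp add: sum.distrib)
qed

lemma sum_abs_diff_minimal:
  fixes n :: "'a \<Rightarrow> int"
  assumes I: "finite I"
    and below: "2 * card {i \<in> I. n i < z} \<le> card I" and above: "2 * card {i \<in> I. z < n i} \<le> card I"
  shows "(\<Sum>i\<in>I. \<bar>z - n i\<bar>) \<le> (\<Sum>i\<in>I. \<bar>x - n i\<bar>)"
proof (cases "z \<le> x")
  case True
  then show ?thesis using sum_abs_diff_le_of_le[OF I above] by blast
next
  case False
  have "(\<Sum>i\<in>I. \<bar>- z - - n i\<bar>) \<le> (\<Sum>i\<in>I. \<bar>- x - - n i\<bar>)"
    using sum_abs_diff_le_of_le[OF I, of "- z" "\<lambda>i. - n i" "- x"] below False by simp
  then show ?thesis by (simp add: abs_minus_commute)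
qed

lemma zmed_minimal:
  assumes l: "l \<ge> 1"
  shows "(\<Sum>i=1..l. \<bar>zmed_of n l - n i\<bar>) \<le> (\<Sum>i=1..l. \<bar>x - n i\<bar>)"
proof -
  define z where "z = zmed_of n l"
  define lo where "lo = order_stat n l ((l - 1) div 2)"
  define hi where "hi = order_stat n l (l div 2)"
  have "lo \<le> hi" unfolding lo_def hi_def using order_stat_mono l by simp
  then have "lo \<le> z" "z \<le> hi" unfolding z_def zmed_eq_order_stat[OF l] lo_def[symmetric] hi_def[symmetric]
    by presburger+
  have "card {i \<in> {1..l}. n i < z} \<le> card {i \<in> {1..l}. n i < hi}"
    using \<open>z \<le> hi\<close> by (intro card_mono) auto
  then have below: "2 * card {i \<in> {1..l}. n i < z} \<le> card {1..l}"
    using card_less_order_stat[of "l div 2" l n] l unfolding hi_def by simp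
  have "{i \<in> {1..l}. z < n i} \<subseteq> {1..l} - {i \<in> {1..l}. n i \<le> lo}"
    using \<open>lo \<le> z\<close> by auto
  then have "card {i \<in> {1..l}. z < n i} \<le> card ({1..l} - {i \<in> {1..l}. n i \<le> lo})"
    by (intro card_mono) auto
  also have "\<dots> = l - card {i \<in> {1..l}. n i \<le> lo}"
    by (subst card_Diff_subset) auto
  also have "\<dots> \<le> l - Suc ((l - 1) div 2)"
    using card_le_order_stat[of "(l - 1) div 2" l n] l unfolding lo_def by (intro diff_le_mono2) simp
  finally have above: "2 * card {i \<in> {1..l}. z < n i} \<le> card {1..l}"
    by simp
  show ?thesis
    using sum_abs_diff_minimal[OF _ below above] unfolding z_def by simp
qed

section \<open>Reconciliation maps\<close>

locale hp_setting =
  fixes P :: "'p rtree" and H :: "'h rtree" and \<phi> :: "'p \<Rightarrow> 'h"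
  assumes hp: "hp_triple P H \<phi>"
begin

sublocale P: phylo P
  using hp by unfold_locales (simp add: hp_triple_def)

sublocale H: phylo H
  using hp by unfold_locales (simp add: hp_triple_def)

lemma mlca_props:
  assumes v: "v \<in> verts P"
  shows "mlca P H \<phi> v \<in> verts H"
    and "\<And>x. x \<in> leaves P \<Longrightarrow> anc P v x \<Longrightarrow> anc H (mlca P H \<phi> v) (\<phi> x)"
    and "\<And>w. w \<in> verts H \<Longrightarrow> (\<forall>x\<in>leaves P. anc P v x \<longrightarrow> anc H w (\<phi> x))
           \<Longrightarrow> anc H w (mlca P H \<phi> v)"
proof -
  let ?L = "\<phi> ` {x \<in> leaves P. anc P v x}"
  have "?L \<subseteq> verts H" using hp unfolding hp_triple_def leaves_def by blast
  moreover have "?L \<noteq> {}" using P.leaf_below[OF v] by blast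
  ultimately show "mlca P H \<phi> v \<in> verts H"
    and "\<And>x. x \<in> leaves P \<Longrightarrow> anc P v x \<Longrightarrow> anc H (mlca P H \<phi> v) (\<phi> x)"
    and "\<And>w. w \<in> verts H \<Longrightarrow> (\<forall>x\<in>leaves P. anc P v x \<longrightarrow> anc H w (\<phi> x))
           \<Longrightarrow> anc H w (mlca P H \<phi> v)"
    using H.lca_props[of ?L] unfolding mlca_def by auto
qed

lemma mlca_leaf: "x \<in> leaves P \<Longrightarrow> mlca P H \<phi> x = \<phi> x"
proof -
  assume x: "x \<in> leaves P"
  then have xv: "x \<in> verts P" by (simp add: leaves_def)
  have fx: "\<phi> x \<in> verts H" using hp x unfolding hp_triple_def leaves_def by blast
  have "anc H (mlca P H \<phi> x) (\<phi> x)" using mlca_props(2)[OF xv x] anc.refl[OF xv] .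
  moreover have "anc H (\<phi> x) (mlca P H \<phi> x)"
    using mlca_props(3)[OF xv fx] leaf_anc[OF x] anc.refl[OF fx] by blast
  ultimately show ?thesis by (rule H.anc_antisym)
qed

lemma mlca_child: "c \<in> children P v \<Longrightarrow> anc H (mlca P H \<phi> v) (mlca P H \<phi> c)"
proof -
  assume c: "c \<in> children P v"
  have cv: "c \<in> verts P" "v \<in> verts P" "anc P v c"
    using childrenD[OF c] P.anc_of_child[OF c] P.anc_in_verts by auto
  have "anc H (mlca P H \<phi> v) (\<phi> x)" if "x \<in> leaves P" "anc P c x" for x
    using mlca_props(2)[OF cv(2) that(1)] anc_trans[OF that(2) cv(3)] .
  then show ?thesis using mlca_props(1,3)[OF cv(1)] mlca_props(1)[OF cv(2)] by blast
qed

lemma Aset_iff: "w \<in> Aset P H \<phi> v \<longleftrightarrow> anc H w (mlca P H \<phi> v)"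
  unfolding Aset_def using H.anc_in_verts H.root_anc by blast

lemma recon_in_verts: "\<psi> \<in> recon P H \<phi> \<Longrightarrow> v \<in> verts P \<Longrightarrow> \<psi> v \<in> verts H"
  by (simp add: recon_def)

lemma recon_leaf: "\<psi> \<in> recon P H \<phi> \<Longrightarrow> x \<in> leaves P \<Longrightarrow> \<psi> x = \<phi> x"
  by (simp add: recon_def)

lemma recon_child: "\<psi> \<in> recon P H \<phi> \<Longrightarrow> c \<in> children P v \<Longrightarrow> anc H (\<psi> v) (\<psi> c)"
  using P.parent_in_inner[of c] childrenD[of c P v] unfolding recon_def by auto

lemma recon_parent:
  "\<psi> \<in> recon P H \<phi> \<Longrightarrow> c \<in> verts P \<Longrightarrow> c \<noteq> root P \<Longrightarrow> anc H (\<psi> (parent P c)) (\<psi> c)"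
  by (simp add: recon_child in_children_parent)

lemma recon_anc:
  assumes \<psi>: "\<psi> \<in> recon P H \<phi>"
  shows "anc P v y \<Longrightarrow> anc H (\<psi> v) (\<psi> y)"
proof (induction rule: anc.induct)
  case (refl x)
  then show ?case by (intro anc.refl recon_in_verts[OF \<psi>])
next
  case (step x y)
  show ?case by (rule anc_trans[OF recon_parent[OF \<psi> step.hyps(2,3)] step.IH])
qed

lemma recon_anc_mlca:
  assumes \<psi>: "\<psi> \<in> recon P H \<phi>" and v: "v \<in> verts P"
  shows "anc H (\<psi> v) (mlca P H \<phi> v)"
proof -
  have "anc H (\<psi> v) (\<phi> x)" if "x \<in> leaves P" "anc P v x" for x
    using recon_anc[OF \<psi> that(2)] recon_leaf[OF \<psi> that(1)] by simp
  then show ?thesis using mlca_props(3)[OF v recon_in_verts[OF \<psi> v]] by blast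
qed

lemma recon_eqI:
  assumes \<psi>: "\<psi> \<in> recon P H \<phi>" and \<psi>': "\<psi>' \<in> recon P H \<phi>"
    and depth_eq: "\<And>v. v \<in> verts P \<Longrightarrow> depth H (\<psi> v) = depth H (\<psi>' v)"
  shows "\<psi> = \<psi>'"
proof
  fix v
  show "\<psi> v = \<psi>' v"
  proof (cases "v \<in> verts P")
    case True
    then show ?thesis
      using H.common_desc_eq_of_depth_eq recon_anc_mlca[OF \<psi>] recon_anc_mlca[OF \<psi>'] depth_eq by blast
  next
    case False
    then show ?thesis using \<psi> \<psi>' unfolding recon_def by simp
  qed
qed

lemma recon_fun_upd:
  assumes \<psi>: "\<psi> \<in> recon P H \<phi>" and w: "w \<in> inner P" and u: "u \<in> verts H"
    and below: "\<And>c. c \<in> children P w \<Longrightarrow> anc H u (\<psi> c)"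
    and above: "w \<noteq> root P \<Longrightarrow> anc H (\<psi> (parent P w)) u"
  shows "\<psi>(w := u) \<in> recon P H \<phi>"
  unfolding recon_def
proof (intro CollectI conjI ballI allI impI)
  fix v v' assume v: "v \<in> inner P" and v': "v' \<in> children P v"
  have "v' \<noteq> v" using P.depth_child[OF v'] by auto
  then consider "v = w" | "v' = w" | "v \<noteq> w" "v' \<noteq> w" by blast
  then show "anc H ((\<psi>(w := u)) v) ((\<psi>(w := u)) v')"
  proof cases
    case 1
    then show ?thesis using below v' \<open>v' \<noteq> v\<close> by simp
  next
    case 2
    then show ?thesis using above childrenD[OF v'] \<open>v' \<noteq> v\<close> by auto
  qed (simp add: recon_child[OF \<psi> v'])
qed (use \<psi> w u in \<open>auto simp: recon_def inner_def\<close>)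

end

section \<open>Edit distance\<close>

text \<open>Since \<open>\<psi> v\<close> and \<open>\<psi>' v\<close> both lie on the root path of \<open>m(v)\<close>, the summand is
  \<open>d\<^sub>H(\<psi> v, \<psi>' v)\<close>, so this is the path distance \<open>d\<^sub>p\<^sub>a\<^sub>t\<^sub>h\<close> of reconciliation maps.\<close>

definition depth_dist :: "'p rtree \<Rightarrow> 'h rtree \<Rightarrow> ('p \<Rightarrow> 'h) \<Rightarrow> ('p \<Rightarrow> 'h) \<Rightarrow> int" where
  "depth_dist P H \<psi> \<psi>' = (\<Sum>v\<in>verts P. \<bar>int (depth H (\<psi> v)) - int (depth H (\<psi>' v))\<bar>)"

lemma depth_dist_nonneg [simp]: "0 \<le> depth_dist P H \<psi> \<psi>'"
  unfolding depth_dist_def by (simp add: sum_nonneg)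

context hp_setting
begin

lemma depth_dist_fun_upd:
  assumes w: "w \<in> verts P"
  shows "depth_dist P H (\<psi>(w := u)) \<psi>' = depth_dist P H \<psi> \<psi>'
           - \<bar>int (depth H (\<psi> w)) - int (depth H (\<psi>' w))\<bar> + \<bar>int (depth H u) - int (depth H (\<psi>' w))\<bar>"
proof -
  have "\<And>\<chi>. depth_dist P H \<chi> \<psi>' = \<bar>int (depth H (\<chi> w)) - int (depth H (\<psi>' w))\<bar>
      + (\<Sum>v\<in>verts P - {w}. \<bar>int (depth H (\<chi> v)) - int (depth H (\<psi>' v))\<bar>)"
    unfolding depth_dist_def by (rule sum.remove[OF P.finite_verts w])
  moreover have "(\<Sum>v\<in>verts P - {w}. \<bar>int (depth H ((\<psi>(w := u)) v)) - int (depth H (\<psi>' v))\<bar>)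
      = (\<Sum>v\<in>verts P - {w}. \<bar>int (depth H (\<psi> v)) - int (depth H (\<psi>' v))\<bar>)"
    by (rule sum.cong) auto
  ultimately show ?thesis by simp
qed

lemma depth_dist_eq_0_iff:
  assumes "\<psi> \<in> recon P H \<phi>" "\<psi>' \<in> recon P H \<phi>"
  shows "depth_dist P H \<psi> \<psi>' = 0 \<longleftrightarrow> \<psi> = \<psi>'"
proof
  assume "depth_dist P H \<psi> \<psi>' = 0"
  then have "\<forall>v\<in>verts P. \<bar>int (depth H (\<psi> v)) - int (depth H (\<psi>' v))\<bar> = 0"
    unfolding depth_dist_def using P.finite_verts by (simp add: sum_nonneg_eq_0_iff)
  then show "\<psi> = \<psi>'" using recon_eqI[OF assms] by simp
qed (simp add: depth_dist_def)

lemma down_op_eq: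
  fixes \<psi> :: "'p \<Rightarrow> 'h" and w :: 'p
  assumes above: "sanc H (\<psi> w) (mlca P H \<phi> w)"
  obtains c where "down_op P H \<phi> \<psi> w = \<psi>(w := c)"
    and "c \<in> children H (\<psi> w)" and "anc H c (mlca P H \<phi> w)"
proof -
  obtain c where c: "c \<in> children H (\<psi> w)" "anc H c (mlca P H \<phi> w)"
    using anc_child[of H "\<psi> w" "mlca P H \<phi> w"] above unfolding sanc_def by blast
  have "(THE u. u \<in> Aset P H \<phi> w \<inter> children H (\<psi> w)) = c"
  proof (rule the_equality)
    show "c \<in> Aset P H \<phi> w \<inter> children H (\<psi> w)" using c Aset_iff by blast
  next
    fix u assume u: "u \<in> Aset P H \<phi> w \<inter> children H (\<psi> w)"
    then have "anc H u (mlca P H \<phi> w)" "depth H u = depth H c"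
      using Aset_iff H.depth_child c(1) by auto
    then show "u = c" using H.common_desc_eq_of_depth_eq c(2) by blast
  qed
  then show ?thesis using that c unfolding down_op_def by blast
qed

lemma edit_step_fun_upd:
  assumes "edit_step P H \<phi> \<psi> \<psi>1"
  obtains w u where "w \<in> verts P" "\<psi>1 = \<psi>(w := u)"
    "depth H u = Suc (depth H (\<psi> w)) \<or> depth H (\<psi> w) = Suc (depth H u)"
  using assms unfolding edit_step_def
proof (elim disjE exE conjE)
  fix w assume ok: "up_ok P H \<phi> \<psi> w" and \<psi>1: "\<psi>1 = up_op H \<psi> w"
  then have "depth H (\<psi> w) = Suc (depth H (parent H (\<psi> w)))"
    using H.depth_parent recon_in_verts unfolding up_ok_def by blast
  then show thesis using that ok \<psi>1 unfolding up_ok_def up_op_def by blast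
next
  fix w assume ok: "down_ok P H \<phi> \<psi> w" and \<psi>1: "\<psi>1 = down_op P H \<phi> \<psi> w"
  then obtain c where "\<psi>1 = \<psi>(w := c)" "c \<in> children H (\<psi> w)"
    using down_op_eq unfolding down_ok_def by blast
  then show thesis using that ok H.depth_child unfolding down_ok_def inner_def by blast
qed

lemma depth_dist_le_relpowp:
  "(edit_step P H \<phi> ^^ n) \<psi> \<psi>' \<Longrightarrow> depth_dist P H \<psi> \<psi>' \<le> int n"
proof (induction n arbitrary: \<psi>)
  case 0
  then show ?case by (simp add: depth_dist_def)
next
  case (Suc n)
  then obtain \<psi>1 where step: "edit_step P H \<phi> \<psi> \<psi>1" and "(edit_step P H \<phi> ^^ n) \<psi>1 \<psi>'"
    using relpowp_Suc_D2 by metis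
  then have "depth_dist P H \<psi>1 \<psi>' \<le> int n" using Suc.IH by blast
  moreover obtain w u where "w \<in> verts P" "\<psi>1 = \<psi>(w := u)"
    "depth H u = Suc (depth H (\<psi> w)) \<or> depth H (\<psi> w) = Suc (depth H u)"
    using edit_step_fun_upd[OF step] .
  ultimately show ?case using depth_dist_fun_upd[of w \<psi> u \<psi>'] by auto
qed

lemma up_op_recon:
  assumes ok: "up_ok P H \<phi> \<psi> w" and w: "w \<in> inner P"
  shows "up_op H \<psi> w \<in> recon P H \<phi>"
  unfolding up_op_def
proof (rule recon_fun_upd[OF _ w])
  have \<psi>: "\<psi> \<in> recon P H \<phi>" and "w \<in> verts P" "\<psi> w \<noteq> root H"
    using ok unfolding up_ok_def by auto
  then have \<psi>w: "\<psi> w \<in> verts H" "\<psi> w \<noteq> root H" using recon_in_verts by auto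
  show "\<psi> \<in> recon P H \<phi>" "parent H (\<psi> w) \<in> verts H"
    using \<psi> H.parent_in_verts[OF \<psi>w] by auto
  show "anc H (parent H (\<psi> w)) (\<psi> c)" if "c \<in> children P w" for c
    using anc_trans[OF recon_child[OF \<psi> that] H.anc_parent[OF \<psi>w]] .
  show "anc H (\<psi> (parent P w)) (parent H (\<psi> w))" if "w \<noteq> root P"
    using anc_eq_or_anc_parent[OF recon_parent[OF \<psi> \<open>w \<in> verts P\<close> that]] ok that
    unfolding up_ok_def by auto
qed

lemma down_op_recon:
  assumes ok: "down_ok P H \<phi> \<psi> w"
  shows "down_op P H \<phi> \<psi> w \<in> recon P H \<phi>"
proof -
  have \<psi>: "\<psi> \<in> recon P H \<phi>" and w: "w \<in> inner P" "w \<in> verts P"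
    and above: "sanc H (\<psi> w) (mlca P H \<phi> w)"
    using ok unfolding down_ok_def inner_def by auto
  obtain c where down: "down_op P H \<phi> \<psi> w = \<psi>(w := c)"
    and c: "c \<in> children H (\<psi> w)" "anc H c (mlca P H \<phi> w)"
    using down_op_eq[of \<psi> w, OF above] .
  have "anc H c (\<psi> v)" if v: "v \<in> children P w" for v
  proof -
    txt \<open>\<open>c\<close> and the child of \<open>\<psi> w\<close> towards \<open>\<psi> v\<close> are both ancestors of \<open>m(v)\<close>.\<close>
    have "\<psi> w \<noteq> \<psi> v" using ok v unfolding down_ok_def by blast
    then obtain c' where c': "c' \<in> children H (\<psi> w)" "anc H c' (\<psi> v)"
      using anc_child[OF recon_child[OF \<psi> v]] by blast
    have "v \<in> verts P" using childrenD[OF v] by simp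
    then have "anc H c' (mlca P H \<phi> v)" "anc H c (mlca P H \<phi> v)"
      using anc_trans[OF recon_anc_mlca[OF \<psi>] c'(2)] anc_trans[OF mlca_child[OF v] c(2)] by auto
    moreover have "depth H c' = depth H c" using H.depth_child c c' by simp
    ultimately have "c' = c" by (rule H.common_desc_eq_of_depth_eq)
    then show ?thesis using c'(2) by simp
  qed
  moreover have "anc H (\<psi> (parent P w)) c" if "w \<noteq> root P"
    using anc_trans[OF H.anc_of_child[OF c(1)] recon_parent[OF \<psi> w(2) that]] .
  moreover have "c \<in> verts H" using childrenD[OF c(1)] by simp
  ultimately show ?thesis using recon_fun_upd[OF \<psi> w(1)] down by simp
qed

lemma recon_neq_imp_inner:
  "\<psi> \<in> recon P H \<phi> \<Longrightarrow> \<psi>' \<in> recon P H \<phi> \<Longrightarrow> w \<in> verts P \<Longrightarrow> \<psi> w \<noteq> \<psi>' w \<Longrightarrow> w \<in> inner P"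
  using recon_leaf[of \<psi> w] recon_leaf[of \<psi>' w] unfolding inner_def by auto

lemma edit_step_down_closer:
  assumes \<psi>: "\<psi> \<in> recon P H \<phi>" and \<psi>': "\<psi>' \<in> recon P H \<phi>"
    and w: "w \<in> verts P" "sanc H (\<psi> w) (\<psi>' w)"
    and children_ok: "\<And>c. c \<in> children P w \<Longrightarrow> \<not> sanc H (\<psi> c) (\<psi>' c)"
  shows "\<exists>\<psi>1. edit_step P H \<phi> \<psi> \<psi>1 \<and> \<psi>1 \<in> recon P H \<phi> \<and> depth_dist P H \<psi>1 \<psi>' + 1 = depth_dist P H \<psi> \<psi>'"
proof -
  have s: "anc H (\<psi> w) (\<psi>' w)" "\<psi> w \<noteq> \<psi>' w" using w(2) unfolding sanc_def by auto
  have m': "anc H (\<psi>' w) (mlca P H \<phi> w)" by (rule recon_anc_mlca[OF \<psi>' w(1)])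
  have "sanc H (\<psi> w) (mlca P H \<phi> w)"
    using anc_trans[OF m' s(1)] H.anc_antisym[OF s(1)] m' s(2) unfolding sanc_def by auto
  moreover have "\<psi> w \<noteq> \<psi> c" if c: "c \<in> children P w" for c
  proof
    assume "\<psi> w = \<psi> c"
    moreover have "anc H (\<psi>' w) (\<psi>' c)" by (rule recon_child[OF \<psi>' c])
    ultimately have "sanc H (\<psi> c) (\<psi>' c)"
      using anc_trans[OF _ s(1)] H.anc_antisym[OF s(1)] s(2) unfolding sanc_def by metis
    then show False using children_ok[OF c] by blast
  qed
  ultimately have ok: "down_ok P H \<phi> \<psi> w"
    using \<psi> recon_neq_imp_inner[OF \<psi> \<psi>' w(1) s(2)] unfolding down_ok_def by blast
  obtain c where down: "down_op P H \<phi> \<psi> w = \<psi>(w := c)" and "c \<in> children H (\<psi> w)"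
    using down_op_eq[of \<psi> w] ok unfolding down_ok_def by blast
  then have "depth H c = Suc (depth H (\<psi> w))" using H.depth_child by blast
  moreover have "depth H (\<psi> w) < depth H (\<psi>' w)" using H.anc_depth_less[OF s] .
  ultimately have "depth_dist P H (down_op P H \<phi> \<psi> w) \<psi>' + 1 = depth_dist P H \<psi> \<psi>'"
    using depth_dist_fun_upd[OF w(1), of \<psi> c \<psi>'] down by simp
  then show ?thesis using ok down_op_recon[OF ok] unfolding edit_step_def by blast
qed

lemma edit_step_up_closer:
  assumes \<psi>: "\<psi> \<in> recon P H \<phi>" and \<psi>': "\<psi>' \<in> recon P H \<phi>"
    and w: "w \<in> verts P" "sanc H (\<psi>' w) (\<psi> w)"
    and parent_ok: "w \<noteq> root P \<Longrightarrow> \<not> sanc H (\<psi>' (parent P w)) (\<psi> (parent P w))"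
  shows "\<exists>\<psi>1. edit_step P H \<phi> \<psi> \<psi>1 \<and> \<psi>1 \<in> recon P H \<phi> \<and> depth_dist P H \<psi>1 \<psi>' + 1 = depth_dist P H \<psi> \<psi>'"
proof -
  have s: "anc H (\<psi>' w) (\<psi> w)" "\<psi>' w \<noteq> \<psi> w" using w(2) unfolding sanc_def by auto
  have deeper: "depth H (\<psi>' w) < depth H (\<psi> w)" using H.anc_depth_less[OF s] .
  then have "\<psi> w \<noteq> root H" using H.depth_root by auto
  moreover have "\<psi> w \<noteq> \<psi> (parent P w)" if r: "w \<noteq> root P"
  proof
    assume "\<psi> w = \<psi> (parent P w)"
    moreover have "anc H (\<psi>' (parent P w)) (\<psi>' w)" by (rule recon_parent[OF \<psi>' w(1) r])
    ultimately have "sanc H (\<psi>' (parent P w)) (\<psi> (parent P w))"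
      using anc_trans[OF s(1)] H.anc_antisym[OF s(1)] s(2) unfolding sanc_def by metis
    then show False using parent_ok[OF r] by blast
  qed
  ultimately have ok: "up_ok P H \<phi> \<psi> w" using \<psi> w(1) unfolding up_ok_def by blast
  have "depth H (\<psi> w) = Suc (depth H (parent H (\<psi> w)))"
    using H.depth_parent recon_in_verts[OF \<psi> w(1)] \<open>\<psi> w \<noteq> root H\<close> by blast
  then have "depth_dist P H (up_op H \<psi> w) \<psi>' + 1 = depth_dist P H \<psi> \<psi>'"
    using depth_dist_fun_upd[OF w(1), of \<psi> "parent H (\<psi> w)" \<psi>'] deeper unfolding up_op_def by simp
  then show ?thesis
    using ok up_op_recon[OF ok recon_neq_imp_inner[OF \<psi> \<psi>' w(1)]] s(2)
    unfolding edit_step_def by auto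
qed

text \<open>A down move is admissible at the deepest vertex where \<open>\<psi>\<close> lies strictly above \<open>\<psi>'\<close>;
  if there is none, an up move is admissible at the shallowest vertex where it lies strictly
  below.\<close>

lemma edit_step_closer:
  assumes \<psi>: "\<psi> \<in> recon P H \<phi>" and \<psi>': "\<psi>' \<in> recon P H \<phi>" and ne: "\<psi> \<noteq> \<psi>'"
  shows "\<exists>\<psi>1. edit_step P H \<phi> \<psi> \<psi>1 \<and> \<psi>1 \<in> recon P H \<phi> \<and> depth_dist P H \<psi>1 \<psi>' + 1 = depth_dist P H \<psi> \<psi>'"
proof (cases "\<exists>v\<in>verts P. sanc H (\<psi> v) (\<psi>' v)")
  case True
  define S where "S = {v \<in> verts P. sanc H (\<psi> v) (\<psi>' v)}"
  obtain v where "v \<in> S" using True unfolding S_def by blast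
  then obtain w where w: "w \<in> S" and deepest: "\<And>v. v \<in> S \<Longrightarrow> depth P v \<le> depth P w"
    using finite_has_max[of S v "depth P"] P.finite_verts unfolding S_def by auto
  have "\<not> sanc H (\<psi> c) (\<psi>' c)" if c: "c \<in> children P w" for c
    using deepest[of c] P.depth_child[OF c] childrenD[OF c] unfolding S_def by auto
  then show ?thesis using edit_step_down_closer[OF \<psi> \<psi>'] w unfolding S_def by blast
next
  case False
  define S where "S = {v \<in> verts P. sanc H (\<psi>' v) (\<psi> v)}"
  obtain v where "\<psi> v \<noteq> \<psi>' v" using ne by blast
  have "v \<in> verts P"
  proof (rule ccontr)
    assume "v \<notin> verts P"
    then show False using \<psi> \<psi>' \<open>\<psi> v \<noteq> \<psi>' v\<close> unfolding recon_def by simp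
  qed
  then have "v \<in> S"
    using anc_linear[OF recon_anc_mlca[OF \<psi>] recon_anc_mlca[OF \<psi>']] False \<open>\<psi> v \<noteq> \<psi>' v\<close>
    unfolding S_def sanc_def by auto
  then obtain w where w: "w \<in> S" and shallowest: "\<And>v. v \<in> S \<Longrightarrow> depth P w \<le> depth P v"
    using finite_has_min[of S v "depth P"] P.finite_verts unfolding S_def by auto
  have "\<not> sanc H (\<psi>' (parent P w)) (\<psi> (parent P w))" if r: "w \<noteq> root P"
    using shallowest[of "parent P w"] P.depth_parent[of w] P.parent_in_verts[of w] w r
    unfolding S_def by auto
  then show ?thesis using edit_step_up_closer[OF \<psi> \<psi>'] w unfolding S_def by blast
qed

lemma relpowp_edit_step_depth_dist:
  assumes "\<psi> \<in> recon P H \<phi>" "\<psi>' \<in> recon P H \<phi>"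
  shows "(edit_step P H \<phi> ^^ nat (depth_dist P H \<psi> \<psi>')) \<psi> \<psi>'"
proof -
  have "depth_dist P H \<psi> \<psi>' = int n \<Longrightarrow> (edit_step P H \<phi> ^^ n) \<psi> \<psi>'" for n
    using assms(1)
  proof (induction n arbitrary: \<psi>)
    case 0
    then show ?case using depth_dist_eq_0_iff assms(2) by simp
  next
    case (Suc n)
    then have "\<psi> \<noteq> \<psi>'" by (auto simp: depth_dist_def)
    then obtain \<psi>1 where step: "edit_step P H \<phi> \<psi> \<psi>1" and "\<psi>1 \<in> recon P H \<phi>"
        "depth_dist P H \<psi>1 \<psi>' + 1 = depth_dist P H \<psi> \<psi>'"
      using edit_step_closer[OF Suc.prems(2) assms(2)] by blast
    then have "(edit_step P H \<phi> ^^ n) \<psi>1 \<psi>'" using Suc.IH Suc.prems(1) by simp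
    with step show ?case by (rule relpowp_Suc_I2)
  qed
  then show ?thesis by simp
qed

lemma d_edit_eq_depth_dist:
  assumes "\<psi> \<in> recon P H \<phi>" "\<psi>' \<in> recon P H \<phi>"
  shows "int (d_edit P H \<phi> \<psi> \<psi>') = depth_dist P H \<psi> \<psi>'"
proof -
  have "d_edit P H \<phi> \<psi> \<psi>' = nat (depth_dist P H \<psi> \<psi>')"
    unfolding d_edit_def
    using relpowp_edit_step_depth_dist[OF assms] depth_dist_le_relpowp
    by (intro Least_equality) fastforce+
  then show ?thesis by simp
qed

section \<open>The median reconciliation map\<close>

lemma tdist_mlca:
  assumes "\<psi> \<in> recon P H \<phi>" "v \<in> verts P"
  shows "int (tdist H (mlca P H \<phi> v) (\<psi> v)) = int (depth H (mlca P H \<phi> v)) - int (depth H (\<psi> v))"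
  using H.tdist_to_anc[OF recon_anc_mlca[OF assms]] H.anc_depth_le[OF recon_anc_mlca[OF assms]] by simp

lemma psi_med_props:
  assumes l: "l \<ge> 1" and \<Psi>: "\<forall>i \<in> {1..l}. \<Psi> i \<in> recon P H \<phi>" and v: "v \<in> verts P"
  defines "z \<equiv> zmed_of (\<lambda>i. int (tdist H (mlca P H \<phi> v) (\<Psi> i v))) l"
  shows "anc H (psi_med P H \<phi> \<Psi> l v) (mlca P H \<phi> v)"
    and "int (depth H (psi_med P H \<phi> \<Psi> l v)) = int (depth H (mlca P H \<phi> v)) - z"
proof -
  let ?m = "mlca P H \<phi> v"
  have "0 \<le> int (tdist H ?m (\<Psi> i v)) \<and> int (tdist H ?m (\<Psi> i v)) \<le> int (depth H ?m)"
    if "i \<in> {1..l}" for i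
    using tdist_mlca[OF _ v, of "\<Psi> i"] \<Psi> that by auto
  then have "0 \<le> z" "z \<le> int (depth H ?m)"
    unfolding z_def by (fact zmed_bounds[OF l])+
  then obtain w where w: "anc H w ?m" and w_depth: "int (depth H w) = int (depth H ?m) - z"
    using H.anc_of_depth[OF mlca_props(1)[OF v], of "depth H ?m - nat z"] by auto
  have "psi_med P H \<phi> \<Psi> l v = (THE w. w \<in> Aset P H \<phi> v \<and> int (tdist H ?m w) = z)"
    unfolding psi_med_def z_def using v by simp
  also have "\<dots> = w"
  proof (rule the_equality)
    show "w \<in> Aset P H \<phi> v \<and> int (tdist H ?m w) = z"
      using w w_depth H.tdist_to_anc[OF w] H.anc_depth_le[OF w] Aset_iff by auto
  next
    fix w' assume w': "w' \<in> Aset P H \<phi> v \<and> int (tdist H ?m w') = z"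
    then have "anc H w' ?m" using Aset_iff by blast
    then have "depth H w' = depth H w"
      using w' w_depth H.tdist_to_anc H.anc_depth_le by fastforce
    then show "w' = w" using H.common_desc_eq_of_depth_eq[OF \<open>anc H w' ?m\<close> w] by simp
  qed
  finally show "anc H (psi_med P H \<phi> \<Psi> l v) ?m" "int (depth H (psi_med P H \<phi> \<Psi> l v)) = int (depth H ?m) - z"
    using w w_depth by simp_all
qed

lemma psi_med_leaf:
  assumes l: "l \<ge> 1" and \<Psi>: "\<forall>i \<in> {1..l}. \<Psi> i \<in> recon P H \<phi>" and x: "x \<in> leaves P"
  shows "psi_med P H \<phi> \<Psi> l x = \<phi> x"
proof -
  have xv: "x \<in> verts P" using x by (simp add: leaves_def)
  have "0 \<le> int (tdist H (mlca P H \<phi> x) (\<Psi> i x)) \<and> int (tdist H (mlca P H \<phi> x) (\<Psi> i x)) \<le> 0"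
    if "i \<in> {1..l}" for i
    using tdist_mlca[OF _ xv, of "\<Psi> i"] \<Psi> that recon_leaf[of "\<Psi> i" x] mlca_leaf[OF x] x by simp
  then have "zmed_of (\<lambda>i. int (tdist H (mlca P H \<phi> x) (\<Psi> i x))) l = 0"
    by (intro order.antisym zmed_bounds[OF l])
  then have "depth H (psi_med P H \<phi> \<Psi> l x) = depth H (mlca P H \<phi> x)"
    using psi_med_props(2)[OF l \<Psi> xv] by simp
  then have "psi_med P H \<phi> \<Psi> l x = mlca P H \<phi> x"
    by (rule H.common_desc_eq_of_depth_eq[OF psi_med_props(1)[OF l \<Psi> xv] anc.refl[OF mlca_props(1)[OF xv]]])
  then show ?thesis using mlca_leaf[OF x] by simp
qed

lemma psi_med_anc_child:
  assumes l: "l \<ge> 1" and \<Psi>: "\<forall>i \<in> {1..l}. \<Psi> i \<in> recon P H \<phi>" and c: "c \<in> children P v"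
  shows "anc H (psi_med P H \<phi> \<Psi> l v) (psi_med P H \<phi> \<Psi> l c)"
proof -
  have vc: "v \<in> verts P" "c \<in> verts P"
    using childrenD[OF c] P.anc_in_verts[OF P.anc_of_child[OF c]] by auto
  let ?k = "int (depth H (mlca P H \<phi> c)) - int (depth H (mlca P H \<phi> v))"
  have "int (tdist H (mlca P H \<phi> c) (\<Psi> i c)) \<le> int (tdist H (mlca P H \<phi> v) (\<Psi> i v)) + ?k"
    if "i \<in> {1..l}" for i
    using tdist_mlca[OF _ vc(1), of "\<Psi> i"] tdist_mlca[OF _ vc(2), of "\<Psi> i"] \<Psi> that
      H.anc_depth_le[OF recon_child[OF _ c], of "\<Psi> i"] by simp
  then have "zmed_of (\<lambda>i. int (tdist H (mlca P H \<phi> c) (\<Psi> i c))) l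
      \<le> zmed_of (\<lambda>i. int (tdist H (mlca P H \<phi> v) (\<Psi> i v))) l + ?k"
    by (rule zmed_shift_le[OF l])
  then have "depth H (psi_med P H \<phi> \<Psi> l v) \<le> depth H (psi_med P H \<phi> \<Psi> l c)"
    using psi_med_props(2)[OF l \<Psi> vc(1)] psi_med_props(2)[OF l \<Psi> vc(2)] by linarith
  moreover have "anc H (psi_med P H \<phi> \<Psi> l v) (mlca P H \<phi> c)"
    using anc_trans[OF mlca_child[OF c] psi_med_props(1)[OF l \<Psi> vc(1)]] .
  ultimately show ?thesis
    using H.common_desc_anc_of_depth_le[OF _ psi_med_props(1)[OF l \<Psi> vc(2)]] by blast
qed

lemma psi_med_recon:
  assumes l: "l \<ge> 1" and \<Psi>: "\<forall>i \<in> {1..l}. \<Psi> i \<in> recon P H \<phi>"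
  shows "psi_med P H \<phi> \<Psi> l \<in> recon P H \<phi>"
  unfolding recon_def
proof (intro CollectI conjI ballI allI impI)
  fix v assume "v \<in> verts P"
  then show "psi_med P H \<phi> \<Psi> l v \<in> verts H"
    using psi_med_props(1)[OF l \<Psi>] H.anc_in_verts by blast
next
  fix v assume "v \<notin> verts P"
  then show "psi_med P H \<phi> \<Psi> l v = undefined" by (simp add: psi_med_def)
qed (simp_all add: psi_med_leaf[OF l \<Psi>] psi_med_anc_child[OF l \<Psi>])

lemma psi_med_vertex_minimal:
  assumes l: "l \<ge> 1" and \<Psi>: "\<forall>i \<in> {1..l}. \<Psi> i \<in> recon P H \<phi>"
    and \<psi>: "\<psi> \<in> recon P H \<phi>" and v: "v \<in> verts P"
  shows "(\<Sum>i=1..l. \<bar>int (depth H (psi_med P H \<phi> \<Psi> l v)) - int (depth H (\<Psi> i v))\<bar>)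
       \<le> (\<Sum>i=1..l. \<bar>int (depth H (\<psi> v)) - int (depth H (\<Psi> i v))\<bar>)"
proof -
  let ?m = "int (depth H (mlca P H \<phi> v))"
  let ?n = "\<lambda>i. int (tdist H (mlca P H \<phi> v) (\<Psi> i v))"
  have n: "?n i = ?m - int (depth H (\<Psi> i v))" if "i \<in> {1..l}" for i
    using tdist_mlca[OF _ v] \<Psi> that by blast
  have "(\<Sum>i=1..l. \<bar>int (depth H (psi_med P H \<phi> \<Psi> l v)) - int (depth H (\<Psi> i v))\<bar>)
      = (\<Sum>i=1..l. \<bar>zmed_of ?n l - ?n i\<bar>)"
    using psi_med_props(2)[OF l \<Psi> v] n by (intro sum.cong) (simp_all add: abs_minus_commute)
  also have "\<dots> \<le> (\<Sum>i=1..l. \<bar>(?m - int (depth H (\<psi> v))) - ?n i\<bar>)"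
    by (rule zmed_minimal[OF l])
  also have "\<dots> = (\<Sum>i=1..l. \<bar>int (depth H (\<psi> v)) - int (depth H (\<Psi> i v))\<bar>)"
    using n by (intro sum.cong) (simp_all add: abs_minus_commute)
  finally show ?thesis .
qed

end

theorem mainTheorem4:
  fixes P :: "'p rtree" and H :: "'h rtree" and \<phi> :: "'p \<Rightarrow> 'h"
    and \<Psi> :: "nat \<Rightarrow> ('p \<Rightarrow> 'h)" and l :: nat
  assumes "hp_triple P H \<phi>"
    and "l \<ge> 1"
    and "\<forall>i \<in> {1..l}. \<Psi> i \<in> recon P H \<phi>"
    and "inj_on \<Psi> {1..l}"
    and "\<psi> \<in> recon P H \<phi>"
  shows "(\<Sum>i = 1..l. d_edit P H \<phi> (psi_med P H \<phi> \<Psi> l) (\<Psi> i))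
           \<le> (\<Sum>i = 1..l. d_edit P H \<phi> \<psi> (\<Psi> i))"
proof -
  interpret hp_setting P H \<phi> by unfold_locales (rule assms(1))
  note l = assms(2) and \<Psi> = assms(3) and \<psi> = assms(5)
  let ?med = "psi_med P H \<phi> \<Psi> l"
  have "int (\<Sum>i = 1..l. d_edit P H \<phi> ?med (\<Psi> i)) = (\<Sum>i = 1..l. depth_dist P H ?med (\<Psi> i))"
    using d_edit_eq_depth_dist[OF psi_med_recon[OF l \<Psi>]] \<Psi> by (simp add: of_nat_sum)
  also have "\<dots> = (\<Sum>v\<in>verts P. \<Sum>i = 1..l. \<bar>int (depth H (?med v)) - int (depth H (\<Psi> i v))\<bar>)"
    unfolding depth_dist_def by (rule sum.swap)
  also have "\<dots> \<le> (\<Sum>v\<in>verts P. \<Sum>i = 1..l. \<bar>int (depth H (\<psi> v)) - int (depth H (\<Psi> i v))\<bar>)"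
    by (intro sum_mono psi_med_vertex_minimal[OF l \<Psi> \<psi>])
  also have "\<dots> = (\<Sum>i = 1..l. depth_dist P H \<psi> (\<Psi> i))"
    unfolding depth_dist_def by (rule sum.swap)
  also have "\<dots> = int (\<Sum>i = 1..l. d_edit P H \<phi> \<psi> (\<Psi> i))"
    using d_edit_eq_depth_dist[OF \<psi>] \<Psi> by (simp add: of_nat_sum)
  finally show ?thesis by (simp only: of_nat_le_iff)
qed

end
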